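(* Let $\{z_n\}_{n\ge 0}$ be a sequence of positive numbers satisfying the recurrence $$z_{n+1}=a_nz_{n}+b_nz_{n-1}\qquad (n\ge 1),$$ where $\{a_n\}$ and $\{b_n\}$ are real sequences. Assume that for all $n\geq 1$ we have $b_{n+1}\geq b_n>0$, $a_{n+1}\geq a_n>0$ and $$21a_n^2+11 a_{n+1}a_n-4b_{n-1}\geq0.$$ For each $n$ let $$f_n(x)=\left[(a_{n+1}a_n+b_{n+1})x+a_{n+1}b_n\right](x-a_{n-1})x^6-b_{n-1}(a_nx+b_n)^4.$$ If there exist a positive integer $N$ and a sequence $\{\lambda_n\}$ such that for all $n\geq N+1$, $$\frac{z_{n}}{z_{n-1}}\geq \lambda_n\geq a_n,\quad f_n''(\lambda_n)>0,\quad f_n'(\lambda_n)>0,\quad f_n(\lambda_n)>0,$$ then the ratio sequence $\{z_{n+1}/z_n\}_{n\ge N}$ is ratio log-convex.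
   Context: A sequence $\{x_n\}$ of positive numbers is log-convex if $x_{n-1}x_{n+1}\ge x_n^2$ for all indices $n$ for which the three terms are defined (i.e. all but the first index), and log-concave if $x_{n-1}x_{n+1}\le x_n^2$ for all such $n$. A sequence $\{x_n\}$ of positive numbers is called ratio log-convex (resp. ratio log-concave) if the sequence $\{x_{n+1}/x_n\}$ is log-convex (resp. log-concave). *)

theory Defs
  imports "HOL-Analysis.Analysis"
begin

definition log_convex :: "(nat \<Rightarrow> real) \<Rightarrow> bool" where
  "log_convex x \<longleftrightarrow> (\<forall>n. x n > 0) \<and> (\<forall>n\<ge>1. x (n - 1) * x (n + 1) \<ge> (x n)\<^sup>2)"

definition log_concave :: "(nat \<Rightarrow> real) \<Rightarrow> bool" where
  "log_concave x \<longleftrightarrow> (\<forall>n. x n > 0) \<and> (\<forall>n\<ge>1. x (n - 1) * x (n + 1) \<le> (x n)\<^sup>2)"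

definition ratio_log_convex :: "(nat \<Rightarrow> real) \<Rightarrow> bool" where
  "ratio_log_convex x \<longleftrightarrow> (\<forall>n. x n > 0) \<and> log_convex (\<lambda>n. x (n + 1) / x n)"

definition ratio_log_concave :: "(nat \<Rightarrow> real) \<Rightarrow> bool" where
  "ratio_log_concave x \<longleftrightarrow> (\<forall>n. x n > 0) \<and> log_concave (\<lambda>n. x (n + 1) / x n)"

definition fpoly :: "(nat \<Rightarrow> real) \<Rightarrow> (nat \<Rightarrow> real) \<Rightarrow> nat \<Rightarrow> real \<Rightarrow> real" where
  "fpoly a b n x =
     ((a (n + 1) * a n + b (n + 1)) * x + a (n + 1) * b n) * (x - a (n - 1)) * x ^ 6
     - b (n - 1) * (a n * x + b n) ^ 4"

end

theory Submission imports Defs begin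

text \<open>Write \<open>x = z\<^sub>m / z\<^sub>m\<^sub>-\<^sub>1\<close>. Eliminating \<open>z\<^sub>m\<^sub>-\<^sub>2\<close>, \<open>z\<^sub>m\<^sub>+\<^sub>1\<close> and \<open>z\<^sub>m\<^sub>+\<^sub>2\<close>
  by the recurrence, the inequality \<open>z\<^sub>m\<^sub>-\<^sub>2 z\<^sub>m\<^sub>+\<^sub>2 z\<^sub>m\<^sup>6 > z\<^sub>m\<^sub>+\<^sub>1\<^sup>4 z\<^sub>m\<^sub>-\<^sub>1\<^sup>4\<close>, which is
  the ratio log-convexity of \<open>z\<^sub>n\<^sub>+\<^sub>1/z\<^sub>n\<close> at the corresponding index, becomes
  \<open>f\<^sub>m(x) > 0\<close> after multiplication by \<open>b\<^sub>m\<^sub>-\<^sub>1 / z\<^sub>m\<^sub>-\<^sub>1\<^sup>8\<close>. The growth and sign conditions on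
  \<open>a\<^sub>n, b\<^sub>n\<close> make \<open>f\<^sub>m'''\<close> positive on \<open>[a\<^sub>m, \<infinity>)\<close>, so positivity of \<open>f\<^sub>m''\<close>, \<open>f\<^sub>m'\<close>
  and \<open>f\<^sub>m\<close> at \<open>\<lambda>\<^sub>m \<ge> a\<^sub>m\<close> propagates to every \<open>x \<ge> \<lambda>\<^sub>m\<close>.\<close>

lemma ratio_log_convex_of_ratio_ineq:
  fixes y :: "nat \<Rightarrow> real"
  assumes pos: "\<And>n. y n > 0"
    and ineq: "\<And>n. y (n + 3) ^ 4 * y (n + 1) ^ 4 \<le> y n * y (n + 4) * y (n + 2) ^ 6"
  shows "ratio_log_convex (\<lambda>n. y (n + 1) / y n)"
  unfolding ratio_log_convex_def log_convex_def
proof (intro conjI allI impI)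
  fix n :: nat
  show "y (n + 1) / y n > 0" "y (n + 1 + 1) / y (n + 1) / (y (n + 1) / y n) > 0"
    using pos by simp_all
next
  have quotient_ineq: "(S / W / (W / V))\<^sup>2 \<le> (W / V / (V / U)) * (T / S / (S / W))"
    if "U > 0" "V > 0" "W > 0" "S > 0" "T > 0" "S^4 * V^4 \<le> U * T * W^6" for U V W S T :: real
  proof -
    have "(S / W / (W / V))\<^sup>2 = (S^4 * V^4) / (W^4 * S^2 * V^2)"
      using that by (simp add: field_simps eval_nat_numeral)
    also have "\<dots> \<le> (U * T * W^6) / (W^4 * S^2 * V^2)"
      using that by (intro divide_right_mono) auto
    also have "\<dots> = (W / V / (V / U)) * (T / S / (S / W))"
      using that by (simp add: field_simps eval_nat_numeral)
    finally show ?thesis .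
  qed
  fix k :: nat
  assume "1 \<le> k"
  then have idx: "k - 1 + 1 = k" "k - 1 + 2 = k + 1" "k - 1 + 3 = k + 1 + 1" "k - 1 + 4 = k + 1 + 1 + 1"
    by simp_all
  show "(y (k + 1 + 1) / y (k + 1) / (y (k + 1) / y k))\<^sup>2
      \<le> y (k - 1 + 1 + 1) / y (k - 1 + 1) / (y (k - 1 + 1) / y (k - 1))
       * (y (k + 1 + 1 + 1) / y (k + 1 + 1) / (y (k + 1 + 1) / y (k + 1)))"
    unfolding idx(1) using ineq[of "k - 1"] unfolding idx by (rule quotient_ineq[OF pos pos pos pos pos])
qed

lemma pos_of_deriv_pos_right:
  fixes g g' :: "real \<Rightarrow> real"
  assumes deriv: "\<And>t. l \<le> t \<Longrightarrow> (g has_real_derivative g' t) (at t)"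
    and deriv_pos: "\<And>t. l \<le> t \<Longrightarrow> g' t > 0"
    and "g l > 0" and "l \<le> x"
  shows "g x > 0"
proof (cases "l = x")
  case False
  have "g l < g x"
  proof (rule DERIV_pos_imp_increasing[of l x g])
    show "l < x" using \<open>l \<le> x\<close> False by simp
  next
    fix t assume "l \<le> t" "t \<le> x"
    then show "\<exists>y. (g has_real_derivative y) (at t) \<and> y > 0"
      using deriv deriv_pos by blast
  qed
  with \<open>g l > 0\<close> show ?thesis by simp
qed (use \<open>g l > 0\<close> in simp)

definition octic :: "real \<Rightarrow> real \<Rightarrow> real \<Rightarrow> real \<Rightarrow> real \<Rightarrow> real \<Rightarrow> real \<Rightarrow> real" where
  "octic A B c d p q x = (A * x + B) * (x - c) * x ^ 6 - d * (p * x + q) ^ 4"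

definition octic_d1 :: "real \<Rightarrow> real \<Rightarrow> real \<Rightarrow> real \<Rightarrow> real \<Rightarrow> real \<Rightarrow> real \<Rightarrow> real" where
  "octic_d1 A B c d p q x = 8*A*x^7 + 7*(B - A*c)*x^6 - 6*B*c*x^5 - 4*d*p*(p*x + q)^3"

definition octic_d2 :: "real \<Rightarrow> real \<Rightarrow> real \<Rightarrow> real \<Rightarrow> real \<Rightarrow> real \<Rightarrow> real \<Rightarrow> real" where
  "octic_d2 A B c d p q x = 56*A*x^6 + 42*(B - A*c)*x^5 - 30*B*c*x^4 - 12*d*p^2*(p*x + q)^2"

definition octic_d3 :: "real \<Rightarrow> real \<Rightarrow> real \<Rightarrow> real \<Rightarrow> real \<Rightarrow> real \<Rightarrow> real \<Rightarrow> real" where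
  "octic_d3 A B c d p q x = 336*A*x^5 + 210*(B - A*c)*x^4 - 120*B*c*x^3 - 24*d*p^3*(p*x + q)"

lemma has_real_derivative_octic:
  "(octic A B c d p q has_real_derivative octic_d1 A B c d p q x) (at x)"
proof -
  have "octic A B c d p q = (\<lambda>x. A*x^8 + (B - A*c)*x^7 - B*c*x^6 - d*(p*x + q)^4)"
    by (rule ext) (simp add: octic_def algebra_simps eval_nat_numeral)
  moreover have "((\<lambda>x. A*x^8 + (B - A*c)*x^7 - B*c*x^6 - d*(p*x + q)^4) has_real_derivative
      A*(8*x^7) + (B - A*c)*(7*x^6) - B*c*(6*x^5) - d*(4*(p*x + q)^3*p)) (at x)"
    by (auto intro!: derivative_eq_intros simp: eval_nat_numeral)
  ultimately show ?thesis
    by (simp add: octic_d1_def algebra_simps)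
qed

lemma has_real_derivative_octic_d1:
  "(octic_d1 A B c d p q has_real_derivative octic_d2 A B c d p q x) (at x)"
proof -
  have "(octic_d1 A B c d p q has_real_derivative
      8*A*(7*x^6) + 7*(B - A*c)*(6*x^5) - 6*B*c*(5*x^4) - 4*d*p*(3*(p*x + q)^2*p)) (at x)"
    unfolding octic_d1_def[abs_def] by (auto intro!: derivative_eq_intros simp: eval_nat_numeral)
  then show ?thesis
    by (simp add: octic_d2_def algebra_simps power2_eq_square)
qed

lemma has_real_derivative_octic_d2:
  "(octic_d2 A B c d p q has_real_derivative octic_d3 A B c d p q x) (at x)"
proof -
  have "(octic_d2 A B c d p q has_real_derivative
      56*A*(6*x^5) + 42*(B - A*c)*(5*x^4) - 30*B*c*(4*x^3) - 12*d*p^2*(2*(p*x + q)*p)) (at x)"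
    unfolding octic_d2_def[abs_def] by (auto intro!: derivative_eq_intros simp: eval_nat_numeral)
  then show ?thesis
    by (simp add: octic_d3_def algebra_simps power2_eq_square power3_eq_cube)
qed

lemma deriv_octic: "deriv (octic A B c d p q) = octic_d1 A B c d p q"
  using has_real_derivative_octic DERIV_imp_deriv by blast

lemma deriv_octic_d1: "deriv (octic_d1 A B c d p q) = octic_d2 A B c d p q"
  using has_real_derivative_octic_d1 DERIV_imp_deriv by blast

lemma fpoly_eq_octic:
  "fpoly a b n = octic (a (n + 1) * a n + b (n + 1)) (a (n + 1) * b n) (a (n - 1)) (b (n - 1)) (a n) (b n)"
  by (rule ext) (simp add: fpoly_def octic_def)

text \<open>In the notation of the theorem, \<open>a' = a\<^sub>m\<^sub>+\<^sub>1\<close>, \<open>p = a\<^sub>m\<close>, \<open>c = a\<^sub>m\<^sub>-\<^sub>1\<close>, \<open>q' = b\<^sub>m\<^sub>+\<^sub>1\<close>,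
  \<open>q = b\<^sub>m\<close>, \<open>d = b\<^sub>m\<^sub>-\<^sub>1\<close>. The terms with \<open>c\<close> are absorbed using \<open>c \<le> x\<close>, the term
  \<open>d p\<^sup>4 x\<close> by \<open>a' q x\<^sup>4\<close>, and \<open>d p\<^sup>3 q\<close> by the hypothesis on \<open>4 d\<close>; what remains is
  \<open>126 a' p x\<^sup>5\<close>.\<close>

lemma octic_d3_pos:
  fixes a' p c q q' d x :: real
  assumes "c \<le> p" "0 < p" "p \<le> a'" "p \<le> x" "0 \<le> d" "d \<le> q" "q \<le> q'"
    and d_bound: "4 * d \<le> 21 * p^2 + 11 * a' * p"
  shows "octic_d3 (a' * p + q') (a' * q) c d p q x > 0"
proof -
  have x: "x > 0" using assms by linarith
  have p_le_x: "p^3 \<le> x^3" "p^4 \<le> x^4" "p^5 \<le> x^5"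
    using assms by (auto intro!: power_mono)
  have A_terms: "336*(a'*p + q')*x^5 - 210*(a'*p + q')*c*x^4 \<ge> 126*(a'*p + q)*x^5"
  proof -
    have "(a'*p + q')*c*x^4 \<le> (a'*p + q')*x*x^4"
      using assms x by (intro mult_right_mono mult_left_mono) auto
    moreover have "(a'*p + q)*x^5 \<le> (a'*p + q')*x^5"
      using assms x by (intro mult_right_mono) auto
    ultimately show ?thesis by (simp add: algebra_simps eval_nat_numeral)
  qed
  have B_term: "120*(a'*q)*c*x^3 \<le> 120*(a'*q)*x^4"
  proof -
    have "c*x^3 \<le> x*x^3" using assms x by (intro mult_right_mono) auto
    then have "(a'*q)*(c*x^3) \<le> (a'*q)*(x*x^3)" using assms by (intro mult_left_mono) auto
    then show ?thesis by (simp add: eval_nat_numeral algebra_simps)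
  qed
  have linear_term: "d*p^3*(p*x) \<le> (a'*q)*x^4"
  proof -
    have "p^4 = p*p^3" by (simp add: eval_nat_numeral)
    also have "\<dots> \<le> a'*x^3" using assms p_le_x by (intro mult_mono) auto
    finally have "p^4*x \<le> a'*x^3*x" using x by (intro mult_right_mono) auto
    then have "d*(p^4*x) \<le> q*(a'*x^3*x)" using assms x by (intro mult_mono) auto
    then show ?thesis by (simp add: eval_nat_numeral algebra_simps)
  qed
  have constant_term: "24*d*p^3*q \<le> 126*q*x^5 + 66*(a'*q)*x^4"
  proof -
    have "24*d*p^3*q = (4*d)*(6*p^3*q)" by simp
    also have "\<dots> \<le> (21*p^2 + 11*a'*p)*(6*p^3*q)"
      using assms d_bound by (intro mult_right_mono) auto
    also have "\<dots> = 126*q*p^5 + 66*(a'*q)*p^4" by (simp add: eval_nat_numeral algebra_simps)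
    also have "\<dots> \<le> 126*q*x^5 + 66*(a'*q)*x^4"
      using p_le_x assms by (intro add_mono mult_left_mono) auto
    finally show ?thesis .
  qed
  have "0 < 126*(a'*p)*x^5"
    using assms x by simp
  also have "\<dots> = 126*(a'*p + q)*x^5 + 210*(a'*q)*x^4 - 120*(a'*q)*x^4 - 24*((a'*q)*x^4)
      - (126*q*x^5 + 66*(a'*q)*x^4)"
    by (simp add: algebra_simps)
  also have "\<dots> \<le> (336*(a'*p + q')*x^5 - 210*(a'*p + q')*c*x^4)
      + 210*(a'*q)*x^4 - 120*(a'*q)*c*x^3 - 24*(d*p^3*(p*x)) - 24*d*p^3*q"
    using A_terms B_term linear_term constant_term by linarith
  also have "\<dots> = octic_d3 (a'*p + q') (a'*q) c d p q x"
    by (simp add: octic_d3_def algebra_simps)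
  finally show ?thesis .
qed

lemma octic_pos_beyond:
  fixes a' p c q q' d l x :: real
  assumes coeffs: "c \<le> p" "0 < p" "p \<le> a'" "0 \<le> d" "d \<le> q" "q \<le> q'"
      "4 * d \<le> 21 * p^2 + 11 * a' * p"
    and "p \<le> l" "l \<le> x"
    and at_l: "octic_d2 (a' * p + q') (a' * q) c d p q l > 0"
      "octic_d1 (a' * p + q') (a' * q) c d p q l > 0"
      "octic (a' * p + q') (a' * q) c d p q l > 0"
  shows "octic (a' * p + q') (a' * q) c d p q x > 0"
proof -
  let ?A = "a' * p + q'" and ?B = "a' * q"
  have d3: "octic_d3 ?A ?B c d p q t > 0" if "l \<le> t" for t
    using coeffs \<open>p \<le> l\<close> that by (intro octic_d3_pos) auto
  have d2: "octic_d2 ?A ?B c d p q t > 0" if "l \<le> t" for t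
    by (rule pos_of_deriv_pos_right[OF has_real_derivative_octic_d2 d3 at_l(1) that])
  have d1: "octic_d1 ?A ?B c d p q t > 0" if "l \<le> t" for t
    by (rule pos_of_deriv_pos_right[OF has_real_derivative_octic_d1 d2 at_l(2) that])
  show ?thesis
    by (rule pos_of_deriv_pos_right[OF has_real_derivative_octic d1 at_l(3) \<open>l \<le> x\<close>])
qed

text \<open>Here \<open>u, v, w, s, t\<close> stand for \<open>z\<^sub>m\<^sub>-\<^sub>2, \<dots>, z\<^sub>m\<^sub>+\<^sub>2\<close> and the hypotheses are three
  consecutive instances of the recurrence.\<close>

lemma octic_homogenized:
  fixes u v w s t a' p c q q' d :: real
  assumes "v > 0"
    and "w = c * v + d * u" "s = p * w + q * v" "t = a' * s + q' * w"
  shows "octic (a' * p + q') (a' * q) c d p q (w / v) * v ^ 8 = d * (u * t * w ^ 6 - s ^ 4 * v ^ 4)"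
proof -
  have "octic (a' * p + q') (a' * q) c d p q (w / v) * v ^ 8
      = ((a' * p + q') * w + a' * q * v) * (w - c * v) * w ^ 6 - d * (p * w + q * v) ^ 4 * v ^ 4"
    using \<open>v > 0\<close> by (simp add: octic_def field_simps eval_nat_numeral)
  with assms show ?thesis by (simp add: algebra_simps)
qed

lemma quartic_ineq_of_octic_pos:
  fixes u v w s t a' p c q q' d :: real
  assumes "v > 0" "d > 0"
    and "w = c * v + d * u" "s = p * w + q * v" "t = a' * s + q' * w"
    and "octic (a' * p + q') (a' * q) c d p q (w / v) > 0"
  shows "s ^ 4 * v ^ 4 < u * t * w ^ 6"
proof -
  have "0 < octic (a' * p + q') (a' * q) c d p q (w / v) * v ^ 8"
    using assms by simp
  also have "\<dots> = d * (u * t * w ^ 6 - s ^ 4 * v ^ 4)"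
    using assms by (intro octic_homogenized)
  finally show ?thesis
    using \<open>d > 0\<close> by (simp add: zero_less_mult_iff)
qed

lemma recurrence_quartic_ineq:
  fixes z a b :: "nat \<Rightarrow> real" and l :: real and k :: nat
  assumes zpos: "\<And>n. z n > 0"
    and rec: "\<And>n. n \<ge> 1 \<Longrightarrow> z (n + 1) = a n * z n + b n * z (n - 1)"
    and bpos: "\<And>n. n \<ge> 1 \<Longrightarrow> b (n + 1) \<ge> b n \<and> b n > 0"
    and apos: "\<And>n. n \<ge> 1 \<Longrightarrow> a (n + 1) \<ge> a n \<and> a n > 0"
    and cond: "\<And>n. n \<ge> 1 \<Longrightarrow> 21 * (a n)\<^sup>2 + 11 * a (n + 1) * a n - 4 * b (n - 1) \<ge> 0"
    and l: "a (k + 2) \<le> l" "l \<le> z (k + 2) / z (k + 1)"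
      "deriv (deriv (fpoly a b (k + 2))) l > 0" "deriv (fpoly a b (k + 2)) l > 0"
      "fpoly a b (k + 2) l > 0"
  shows "z (k + 3) ^ 4 * z (k + 1) ^ 4 < z k * z (k + 4) * z (k + 2) ^ 6"
proof -
  have idx: "k + 1 + 1 = k + 2" "k + 1 - 1 = k" "k + 2 + 1 = k + 3" "k + 2 - 1 = k + 1"
    "k + 3 + 1 = k + 4" "k + 3 - 1 = k + 2"
    by simp_all
  let ?f = "octic (a (k + 3) * a (k + 2) + b (k + 3)) (a (k + 3) * b (k + 2)) (a (k + 1)) (b (k + 1))
    (a (k + 2)) (b (k + 2))"
  let ?f' = "octic_d1 (a (k + 3) * a (k + 2) + b (k + 3)) (a (k + 3) * b (k + 2)) (a (k + 1))
    (b (k + 1)) (a (k + 2)) (b (k + 2))"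
  let ?f'' = "octic_d2 (a (k + 3) * a (k + 2) + b (k + 3)) (a (k + 3) * b (k + 2)) (a (k + 1))
    (b (k + 1)) (a (k + 2)) (b (k + 2))"
  have f_at_l: "?f'' l > 0" "?f' l > 0" "?f l > 0"
    using l(3-5) unfolding fpoly_eq_octic deriv_octic deriv_octic_d1 idx by simp_all
  have coeffs: "a (k + 1) \<le> a (k + 2)" "0 < a (k + 2)" "a (k + 2) \<le> a (k + 3)"
    "0 < b (k + 1)" "b (k + 1) \<le> b (k + 2)" "b (k + 2) \<le> b (k + 3)"
    "4 * b (k + 1) \<le> 21 * (a (k + 2))^2 + 11 * a (k + 3) * a (k + 2)"
    using apos[of "k + 1"] apos[of "k + 2"] bpos[of "k + 1"] bpos[of "k + 2"] cond[of "k + 2"]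
    unfolding idx by auto
  show ?thesis
  proof (rule quartic_ineq_of_octic_pos)
    show "z (k + 2) = a (k + 1) * z (k + 1) + b (k + 1) * z k"
      "z (k + 3) = a (k + 2) * z (k + 2) + b (k + 2) * z (k + 1)"
      "z (k + 4) = a (k + 3) * z (k + 3) + b (k + 3) * z (k + 2)"
      using rec[of "k + 1"] rec[of "k + 2"] rec[of "k + 3"] unfolding idx by simp_all
    show "?f (z (k + 2) / z (k + 1)) > 0"
      using coeffs(4) by (intro octic_pos_beyond[OF coeffs(1,2,3) _ coeffs(5,6,7) l(1,2) f_at_l]) simp
  qed (use zpos coeffs(4) in auto)
qed

theorem theorem2p1:
  fixes z a b lam :: "nat \<Rightarrow> real" and N :: nat
  assumes zpos: "\<And>n. z n > 0"
    and rec: "\<And>n. n \<ge> 1 \<Longrightarrow> z (n + 1) = a n * z n + b n * z (n - 1)"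
    and bpos: "\<And>n. n \<ge> 1 \<Longrightarrow> b (n + 1) \<ge> b n \<and> b n > 0"
    and apos: "\<And>n. n \<ge> 1 \<Longrightarrow> a (n + 1) \<ge> a n \<and> a n > 0"
    and cond: "\<And>n. n \<ge> 1 \<Longrightarrow> 21 * (a n)\<^sup>2 + 11 * a (n + 1) * a n - 4 * b (n - 1) \<ge> 0"
    and N: "N \<ge> 1"
    and lam: "\<And>n. n \<ge> N + 1 \<Longrightarrow>
               z n / z (n - 1) \<ge> lam n \<and> lam n \<ge> a n
             \<and> deriv (deriv (fpoly a b n)) (lam n) > 0
             \<and> deriv (fpoly a b n) (lam n) > 0
             \<and> fpoly a b n (lam n) > 0"
  shows "ratio_log_convex (\<lambda>k. z (N + k + 1) / z (N + k))"
proof -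
  have quartic: "z (N + n + 3) ^ 4 * z (N + n + 1) ^ 4 < z (N + n) * z (N + n + 4) * z (N + n + 2) ^ 6"
    for n using lam[of "N + n + 2"]
    by (intro recurrence_quartic_ineq[OF zpos rec bpos apos cond, where l = "lam (N + n + 2)"]) simp_all
  have "z (N + n + 3) ^ 4 * z (N + n + 1) ^ 4 \<le> z (N + n) * z (N + n + 4) * z (N + n + 2) ^ 6"
    for n using quartic[of n] by simp
  then show ?thesis
    using ratio_log_convex_of_ratio_ineq[of "\<lambda>k. z (N + k)"] zpos by (simp add: add.assoc)
qed

end
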